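(* Under the hypotheses and notation of the context (PQRS-form with $m\ge1$ and $S$ invertible self-adjoint), the scattering matrix admits, for all sufficiently small $k>0$, the convergent expansion $$\mathcal S(k)=-I^{(n)}+2M_Q\left(I^{(a)}+RR^*+QQ^*\right)^{-1}M_Q^*-2\mathrm ik\,X\left[\sum_{j=0}^\infty(\mathrm ik)^j\left(S^{-1}X^*X\right)^j\right]S^{-1}X^*,$$ and in particular $$\lim_{k\to0^+}\mathcal S(k)=-I^{(n)}+2M_Q\left(I^{(a)}+RR^*+QQ^*\right)^{-1}M_Q^*.$$
   Context: $I^{(j)}$ denotes the $j\times j$ identity matrix. Let $0\le r_A,r_B\le n$ with $m=r_A+r_B-n\ge1$, $a=n-r_A$, $b=n-r_B$, $S\in\mathbb C^{m\times m}$ invertible self-adjoint, $P\in\mathbb C^{m\times b}$, $Q\in\mathbb C^{a\times b}$, $R\in\mathbb C^{a\times m}$. The vertex coupling is given by the PQRS-form $B_{PQRS}\Psi'=A_{PQRS}\Psi$ with (block sizes $m,a,b$) $$B_{PQRS}=\begin{pmatrix} I^{(m)} & 0 & P\\ R & I^{(a)} & Q\\ 0&0&0\end{pmatrix},\qquad A_{PQRS}=\begin{pmatrix} S & -SR^* & 0\\ 0&0&0\\ -P^* & (RP-Q)^* & I^{(b)}\end{pmatrix};$$ its scattering matrix is $\mathcal S(k)=-(A+\mathrm ikB)^{-1}(A-\mathrm ikB)$, $k>0$, with $A=-A_{PQRS}$, $B=B_{PQRS}$. Further, $$M_Q=\begin{pmatrix}R^*\\ I^{(a)}\\ Q^*\end{pmatrix},\quad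 X=\begin{pmatrix}I^{(m)}\\0\\P^*\end{pmatrix}-M_Q\left(I^{(a)}+RR^*+QQ^*\right)^{-1}(R+QP^* ).$$ *)

theory Defs
  imports "HOL-Analysis.Analysis" "Jordan_Normal_Form.Schur_Decomposition"
    "Jordan_Normal_Form.Gauss_Jordan_Elimination"
begin

abbreviation adj :: "complex mat \<Rightarrow> complex mat" where
  "adj A \<equiv> mat_adjoint A"

definition minv :: "complex mat \<Rightarrow> complex mat" where
  "minv A = the (mat_inverse A)"

definition vstack :: "'a::zero mat \<Rightarrow> 'a mat \<Rightarrow> 'a mat" where
  "vstack A B = four_block_mat A (0\<^sub>m (dim_row A) 0) B (0\<^sub>m (dim_row B) 0)"

definition hstack :: "'a::zero mat \<Rightarrow> 'a mat \<Rightarrow> 'a mat" where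
  "hstack A B = four_block_mat A B (0\<^sub>m 0 (dim_col A)) (0\<^sub>m 0 (dim_col B))"

text \<open>Block sizes: m = dim_row S, a = dim_row Q, b = dim_col Q.
  B_PQRS = [[I_m, 0, P], [R, I_a, Q], [0, 0, 0]]\<close>
definition B_PQRS :: "complex mat \<Rightarrow> complex mat \<Rightarrow> complex mat \<Rightarrow> complex mat \<Rightarrow> complex mat" where
  "B_PQRS P Q R S = (let m = dim_row S; a = dim_row Q; b = dim_col Q in
     four_block_mat
       (four_block_mat (1\<^sub>m m) (0\<^sub>m m a) R (1\<^sub>m a))
       (vstack P Q)
       (0\<^sub>m b (m + a))
       (0\<^sub>m b b))"

text \<open>A_PQRS = [[S, -S R^*, 0], [0, 0, 0], [-P^*, (RP-Q)^*, I_b]]\<close>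
definition A_PQRS :: "complex mat \<Rightarrow> complex mat \<Rightarrow> complex mat \<Rightarrow> complex mat \<Rightarrow> complex mat" where
  "A_PQRS P Q R S = (let m = dim_row S; a = dim_row Q; b = dim_col Q in
     four_block_mat
       (four_block_mat S (- (S * adj R)) (0\<^sub>m a m) (0\<^sub>m a a))
       (0\<^sub>m (m + a) b)
       (hstack (- adj P) (adj (R * P - Q)))
       (1\<^sub>m b))"

definition scat :: "complex mat \<Rightarrow> complex mat \<Rightarrow> complex mat \<Rightarrow> complex mat \<Rightarrow> real \<Rightarrow> complex mat" where
  "scat P Q R S k = (let A = - A_PQRS P Q R S; B = B_PQRS P Q R S in
     - (minv (A + (\<i> * complex_of_real k) \<cdot>\<^sub>m B) * (A - (\<i> * complex_of_real k) \<cdot>\<^sub>m B)))"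

definition M_Q :: "complex mat \<Rightarrow> complex mat \<Rightarrow> complex mat" where
  "M_Q Q R = vstack (adj R) (vstack (1\<^sub>m (dim_row Q)) (adj Q))"

definition G_QR :: "complex mat \<Rightarrow> complex mat \<Rightarrow> complex mat" where
  "G_QR Q R = minv (1\<^sub>m (dim_row Q) + R * adj R + Q * adj Q)"

definition Xmat :: "complex mat \<Rightarrow> complex mat \<Rightarrow> complex mat \<Rightarrow> complex mat \<Rightarrow> complex mat" where
  "Xmat P Q R S = vstack (1\<^sub>m (dim_row S)) (vstack (0\<^sub>m (dim_row Q) (dim_row S)) (adj P))
                  - M_Q Q R * G_QR Q R * (R + Q * adj P)"

end

theory Submission
  imports Defs
begin

(*
  With A = -A_PQRS and B = B_PQRS, write K(z) = A + zB, so that S(k) = -K(ik)^-1 (A - ikB).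
  Splitting C^n = C^m + C^a + C^b, both matrices are stacks of block rows, and all that is needed
  about them is a short table of products of these block rows with the block columns
  E = [I; 0; P^*], M = M_Q = [R^*; I; Q^*] and J = [0; 0; I].  Put N = R + Q P^*,
  H = I + R R^* + Q Q^* and G = H^-1.  From the table one reads off that X = E - M G N satisfies
  K(z) X = [z X^* X - S; 0; 0].  Hence, whenever W inverts 1 - zT with T = S^-1 X^* X, the
  inverse of K(z) can be written down column block by column block, and the scattering matrix is
      F(z) = -I + 2 M G M^* - 2z X W S^-1 X^*.
  For small |z| the Neumann series W = sum_j z^j T^j converges and is bounded, measured in the
  entrywise l1-norm, which is submultiplicative; this gives the expansion, and the bound on W
  makes the correction term O(k), which gives the limit as k tends to 0 from above.
*)

section \<open>Block matrices\<close>

lemma four_block_mat_empty_corner: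
  "dim_row D = 0 \<Longrightarrow> dim_col D = 0 \<Longrightarrow> four_block_mat A B C D = A"
  by (rule eq_matI) auto

lemma vstack_carrier [simp]:
  "A \<in> carrier_mat r1 c \<Longrightarrow> B \<in> carrier_mat r2 c \<Longrightarrow> vstack A B \<in> carrier_mat (r1 + r2) c"
  unfolding vstack_def by auto

lemma hstack_carrier [simp]:
  "A \<in> carrier_mat r c1 \<Longrightarrow> B \<in> carrier_mat r c2 \<Longrightarrow> hstack A B \<in> carrier_mat r (c1 + c2)"
  unfolding hstack_def by auto

lemma vstack_dims [simp]:
  "dim_row (vstack A B) = dim_row A + dim_row B" "dim_col (vstack A B) = dim_col A"
  unfolding vstack_def by auto

lemma hstack_dims [simp]:
  "dim_row (hstack A B) = dim_row A" "dim_col (hstack A B) = dim_col A + dim_col B"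
  unfolding hstack_def by auto

lemma hstack_mult_vstack:
  fixes A B :: "'a::semiring_0 mat"
  assumes "A \<in> carrier_mat r c1" "B \<in> carrier_mat r c2" "C \<in> carrier_mat c1 s" "D \<in> carrier_mat c2 s"
  shows "hstack A B * vstack C D = A * C + B * D"
proof -
  have "hstack A B * vstack C D =
        four_block_mat A B (0\<^sub>m 0 c1) (0\<^sub>m 0 c2) * four_block_mat C (0\<^sub>m c1 0) D (0\<^sub>m c2 0)"
    using assms unfolding hstack_def vstack_def by auto
  also have "\<dots> = four_block_mat (A * C + B * D) (A * 0\<^sub>m c1 0 + B * 0\<^sub>m c2 0)
      (0\<^sub>m 0 c1 * C + 0\<^sub>m 0 c2 * D) (0\<^sub>m 0 c1 * 0\<^sub>m c1 0 + 0\<^sub>m 0 c2 * 0\<^sub>m c2 0)"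
    by (rule mult_four_block_mat) (use assms in auto)
  also have "\<dots> = A * C + B * D" by (rule four_block_mat_empty_corner) auto
  finally show ?thesis .
qed

lemma vstack_mult:
  fixes A B :: "'a::semiring_0 mat"
  assumes "A \<in> carrier_mat r1 c" "B \<in> carrier_mat r2 c" "C \<in> carrier_mat c s"
  shows "vstack A B * C = vstack (A * C) (B * C)"
  using assms unfolding vstack_def
  by (intro eq_matI) (auto simp: four_block_mat_def row_def col_def scalar_prod_def)

lemma mult_hstack:
  fixes A B :: "'a::semiring_0 mat"
  assumes "A \<in> carrier_mat r c" "B \<in> carrier_mat c s1" "C \<in> carrier_mat c s2"
  shows "A * hstack B C = hstack (A * B) (A * C)"
  using assms unfolding hstack_def
  by (intro eq_matI) (auto simp: four_block_mat_def row_def col_def scalar_prod_def)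

definition vstack3 :: "'a::zero mat \<Rightarrow> 'a mat \<Rightarrow> 'a mat \<Rightarrow> 'a mat" where
  "vstack3 A B C = vstack A (vstack B C)"

definition hstack3 :: "'a::zero mat \<Rightarrow> 'a mat \<Rightarrow> 'a mat \<Rightarrow> 'a mat" where
  "hstack3 A B C = hstack A (hstack B C)"

lemma vstack3_dims [simp]:
  "dim_row (vstack3 A B C) = dim_row A + dim_row B + dim_row C" "dim_col (vstack3 A B C) = dim_col A"
  unfolding vstack3_def by auto

lemma hstack3_dims [simp]:
  "dim_row (hstack3 A B C) = dim_row A" "dim_col (hstack3 A B C) = dim_col A + dim_col B + dim_col C"
  unfolding hstack3_def by auto

lemma hstack3_mult_vstack3:
  fixes A1 :: "'a::semiring_0 mat"
  assumes "A1 \<in> carrier_mat r c1" "A2 \<in> carrier_mat r c2" "A3 \<in> carrier_mat r c3"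
    "B1 \<in> carrier_mat c1 s" "B2 \<in> carrier_mat c2 s" "B3 \<in> carrier_mat c3 s"
  shows "hstack3 A1 A2 A3 * vstack3 B1 B2 B3 = A1 * B1 + (A2 * B2 + A3 * B3)"
  unfolding hstack3_def vstack3_def using assms
  by (simp add: hstack_mult_vstack[of _ r c1 _ "c2 + c3" _ s] hstack_mult_vstack[of _ r c2 _ c3 _ s])

lemma vstack3_mult:
  fixes A1 :: "'a::semiring_0 mat"
  assumes "A1 \<in> carrier_mat r1 c" "A2 \<in> carrier_mat r2 c" "A3 \<in> carrier_mat r3 c" "Z \<in> carrier_mat c s"
  shows "vstack3 A1 A2 A3 * Z = vstack3 (A1 * Z) (A2 * Z) (A3 * Z)"
  unfolding vstack3_def using assms
  by (simp add: vstack_mult[of _ r1 c _ "r2 + r3" Z s] vstack_mult[of _ r2 c _ r3 Z s])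

lemma mult_hstack3:
  fixes Z :: "'a::semiring_0 mat"
  assumes "A1 \<in> carrier_mat c s1" "A2 \<in> carrier_mat c s2" "A3 \<in> carrier_mat c s3" "Z \<in> carrier_mat r c"
  shows "Z * hstack3 A1 A2 A3 = hstack3 (Z * A1) (Z * A2) (Z * A3)"
  unfolding hstack3_def using assms
  by (simp add: mult_hstack[of Z r c _ s1 _ "s2 + s3"] mult_hstack[of Z r c _ s2 _ s3])

lemma vstack3_entrywise:
  fixes A1 :: "'a::group_add mat"
  assumes "dim_row A1 = dim_row B1" "dim_row A2 = dim_row B2" "dim_row A3 = dim_row B3"
    "dim_col A2 = dim_col A1" "dim_col A3 = dim_col A1"
    "dim_col B1 = dim_col A1" "dim_col B2 = dim_col A1" "dim_col B3 = dim_col A1"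
  shows "vstack3 A1 A2 A3 + vstack3 B1 B2 B3 = vstack3 (A1 + B1) (A2 + B2) (A3 + B3)"
    and "vstack3 A1 A2 A3 - vstack3 B1 B2 B3 = vstack3 (A1 - B1) (A2 - B2) (A3 - B3)"
  using assms unfolding vstack3_def vstack_def by (intro eq_matI; auto)+

lemma vstack3_uminus:
  fixes A1 :: "'a::group_add mat"
  assumes "dim_col A2 = dim_col A1" "dim_col A3 = dim_col A1"
  shows "- vstack3 A1 A2 A3 = vstack3 (- A1) (- A2) (- A3)"
  using assms unfolding vstack3_def vstack_def by (intro eq_matI) auto

lemma vstack3_smult:
  fixes A1 :: "'a::semiring_0 mat"
  assumes "dim_col A2 = dim_col A1" "dim_col A3 = dim_col A1"
  shows "x \<cdot>\<^sub>m vstack3 A1 A2 A3 = vstack3 (x \<cdot>\<^sub>m A1) (x \<cdot>\<^sub>m A2) (x \<cdot>\<^sub>m A3)"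
  using assms unfolding vstack3_def vstack_def by (intro eq_matI) auto

lemma hstack3_unit_columns:
  "hstack3 (vstack3 (1\<^sub>m m) (0\<^sub>m a m) (0\<^sub>m b m)) (vstack3 (0\<^sub>m m a) (1\<^sub>m a) (0\<^sub>m b a))
     (vstack3 (0\<^sub>m m b) (0\<^sub>m a b) (1\<^sub>m b)) = (1\<^sub>m (m + a + b) :: 'a::zero_neq_one mat)"
  unfolding vstack3_def hstack3_def vstack_def hstack_def by (intro eq_matI) auto

lemma adj_carrier [simp]: "A \<in> carrier_mat r c \<Longrightarrow> adj A \<in> carrier_mat c r"
  unfolding mat_adjoint_def by auto

lemma adj_dims [simp]: "dim_row (adj A) = dim_col A" "dim_col (adj A) = dim_row A"
  unfolding mat_adjoint_def by auto

lemma adj_index [simp]: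
  "i < dim_col A \<Longrightarrow> j < dim_row A \<Longrightarrow> adj A $$ (i, j) = cnj (A $$ (j, i))"
  unfolding mat_adjoint_def by (auto simp: mat_of_rows_index)

lemma adj_adj [simp]: "adj (adj A) = A"
  by (intro eq_matI) auto

lemma adj_one [simp]: "adj (1\<^sub>m n) = 1\<^sub>m n"
  by (intro eq_matI) auto

lemma adj_zero [simp]: "adj (0\<^sub>m r c) = 0\<^sub>m c r"
  by (intro eq_matI) auto

lemma adj_uminus: "adj (- A) = - adj A"
  by (intro eq_matI) auto

lemma adj_smult: "adj (k \<cdot>\<^sub>m A) = cnj k \<cdot>\<^sub>m adj A"
  by (intro eq_matI) auto

lemma adj_add: "dim_row A = dim_row B \<Longrightarrow> dim_col A = dim_col B \<Longrightarrow> adj (A + B) = adj A + adj B"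
  by (intro eq_matI) auto

lemma adj_minus: "dim_row A = dim_row B \<Longrightarrow> dim_col A = dim_col B \<Longrightarrow> adj (A - B) = adj A - adj B"
  by (intro eq_matI) auto

lemma adj_mult: "dim_col A = dim_row B \<Longrightarrow> adj (A * B) = adj B * adj A"
  by (intro eq_matI) (auto simp: scalar_prod_def mult.commute intro: sum.cong)

lemma adj_vstack3:
  "dim_col B = dim_col A \<Longrightarrow> dim_col C = dim_col A \<Longrightarrow>
   adj (vstack3 A B C) = hstack3 (adj A) (adj B) (adj C)"
  unfolding vstack3_def hstack3_def vstack_def hstack_def by (intro eq_matI) auto

section \<open>Matrix algebra driven by dimensions\<close>

text \<open>The ring laws for matrices carry carrier side
  conditions; restated with equations between dimensions they can be used as conditional rewrite
  rules whose side conditions the simplifier discharges from the [simp] dimension facts.  Rewriting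
  with this collection normalises a matrix expression: products are associated to the right,
  distributed over sums and differences, scalars are pulled out, and adjoints are pushed inwards.\<close>

named_theorems mat_algebra

lemma assoc_mult_dims [mat_algebra]:
  "dim_col A = dim_row B \<Longrightarrow> dim_col B = dim_row C \<Longrightarrow> A * B * C = A * (B * C)"
  by (rule assoc_mult_mat[OF carrier_matI carrier_matI carrier_matI]) auto

lemma mult_add_distrib_dims [mat_algebra]:
  fixes A :: "'a::semiring_0 mat"
  shows "dim_col A = dim_row B \<Longrightarrow> dim_row B = dim_row C \<Longrightarrow> dim_col B = dim_col C \<Longrightarrow>
    A * (B + C) = A * B + A * C"
  by (rule mult_add_distrib_mat[OF carrier_matI carrier_matI carrier_matI]) auto

lemma add_mult_distrib_dims [mat_algebra]:
  fixes A :: "'a::semiring_0 mat"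
  shows "dim_row A = dim_row B \<Longrightarrow> dim_col A = dim_col B \<Longrightarrow> dim_col A = dim_row C \<Longrightarrow>
    (A + B) * C = A * C + B * C"
  by (rule add_mult_distrib_mat[OF carrier_matI carrier_matI carrier_matI]) auto

lemma mult_minus_distrib_dims [mat_algebra]:
  fixes A :: "'a::ring mat"
  shows "dim_col A = dim_row B \<Longrightarrow> dim_row B = dim_row C \<Longrightarrow> dim_col B = dim_col C \<Longrightarrow>
    A * (B - C) = A * B - A * C"
  by (rule mult_minus_distrib_mat[OF carrier_matI carrier_matI carrier_matI]) auto

lemma minus_mult_distrib_dims [mat_algebra]:
  fixes A :: "'a::ring mat"
  shows "dim_row A = dim_row B \<Longrightarrow> dim_col A = dim_col B \<Longrightarrow> dim_col A = dim_row C \<Longrightarrow>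
    (A - B) * C = A * C - B * C"
  by (rule minus_mult_distrib_mat[OF carrier_matI carrier_matI carrier_matI]) auto

lemma smult_mult_dims [mat_algebra]:
  fixes k :: "'a::comm_semiring_0"
  shows "dim_col A = dim_row B \<Longrightarrow> (k \<cdot>\<^sub>m A) * B = k \<cdot>\<^sub>m (A * B)"
    and "dim_col A = dim_row B \<Longrightarrow> A * (k \<cdot>\<^sub>m B) = k \<cdot>\<^sub>m (A * B)"
  by (rule mult_smult_assoc_mat mult_smult_distrib; auto intro!: carrier_matI)+

lemma smult_smult_mat [mat_algebra]: "k \<cdot>\<^sub>m (l \<cdot>\<^sub>m A) = (k * l :: 'a::semigroup_mult) \<cdot>\<^sub>m A"
  by (rule eq_matI) (auto simp: mult.assoc)

lemma smult_one_mat [mat_algebra]: "(1::'a::monoid_mult) \<cdot>\<^sub>m A = A"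
  by (rule eq_matI) auto

lemma minus_zero_dims [mat_algebra]:
  fixes A :: "'a::group_add mat"
  shows "dim_row A = r \<Longrightarrow> dim_col A = c \<Longrightarrow> A - 0\<^sub>m r c = A"
    and "dim_row A = r \<Longrightarrow> dim_col A = c \<Longrightarrow> 0\<^sub>m r c - A = - A"
  by (rule eq_matI; auto)+

lemma additive_inverse_mat [mat_algebra]:
  fixes A :: "'a::ab_group_add mat"
  shows "A - A = 0\<^sub>m (dim_row A) (dim_col A)"
    and "A + - A = 0\<^sub>m (dim_row A) (dim_col A)"
    and "- A + A = 0\<^sub>m (dim_row A) (dim_col A)"
    and "- 0\<^sub>m r c = (0\<^sub>m r c :: 'a mat)"
  by (rule eq_matI; auto)+

lemma vstack3_mult_dims [mat_algebra]:
  fixes A1 :: "'a::semiring_0 mat"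
  assumes "dim_col A1 = dim_row Z" "dim_col A2 = dim_col A1" "dim_col A3 = dim_col A1"
  shows "vstack3 A1 A2 A3 * Z = vstack3 (A1 * Z) (A2 * Z) (A3 * Z)"
  by (rule vstack3_mult[of _ "dim_row A1" "dim_col A1" _ "dim_row A2" _ "dim_row A3" _ "dim_col Z"];
      rule carrier_matI; simp add: assms)

lemma mult_hstack3_dims [mat_algebra]:
  fixes Z :: "'a::semiring_0 mat"
  assumes "dim_col Z = dim_row A1" "dim_row A2 = dim_row A1" "dim_row A3 = dim_row A1"
  shows "Z * hstack3 A1 A2 A3 = hstack3 (Z * A1) (Z * A2) (Z * A3)"
  by (rule mult_hstack3[of _ "dim_row A1" "dim_col A1" _ "dim_col A2" _ "dim_col A3" _ "dim_row Z"];
      rule carrier_matI; simp add: assms)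

declare vstack3_entrywise [mat_algebra] vstack3_uminus [mat_algebra] vstack3_smult [mat_algebra]
  adj_uminus [mat_algebra] adj_smult [mat_algebra] adj_add [mat_algebra] adj_minus [mat_algebra]
  adj_mult [mat_algebra]

text \<open>Turns a product identity \<open>A B = C\<close> into a rewrite rule that also applies inside the
  right-associated normal form.\<close>
lemma mult_assoc_cancel:
  "A * B = C \<Longrightarrow> dim_col A = dim_row B \<Longrightarrow> dim_col B = dim_row Z \<Longrightarrow> A * (B * Z) = C * Z"
  using assoc_mult_dims[of A B Z] by simp

lemma adj_mult_vec_inner:
  assumes C: "C \<in> carrier_mat r c" and v: "v \<in> carrier_vec r" and w: "w \<in> carrier_vec c"
  shows "(C *\<^sub>v w) \<bullet>c v = w \<bullet>c (adj C *\<^sub>v v)"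
proof -
  have "(C *\<^sub>v w) \<bullet>c v = (\<Sum>i<r. (\<Sum>j<c. C $$ (i, j) * w $ j) * cnj (v $ i))"
    using C v w by (simp add: scalar_prod_def mult_mat_vec_def lessThan_atLeast0 row_def)
  also have "\<dots> = (\<Sum>j<c. w $ j * cnj (\<Sum>i<r. cnj (C $$ (i, j)) * v $ i))"
    by (simp add: sum_distrib_left sum_distrib_right sum.swap[of _ "{..<r}"] mult_ac)
  also have "\<dots> = w \<bullet>c (adj C *\<^sub>v v)"
    using C v w by (simp add: scalar_prod_def mult_mat_vec_def lessThan_atLeast0 row_def)
  finally show ?thesis .
qed

text \<open>\<open>I + R R\<^sup>* + Q Q\<^sup>*\<close> is positive definite, \<open>v\<^sup>*(I + R R\<^sup>* + Q Q\<^sup>*)v = |v|\<^sup>2 + |R\<^sup>*v|\<^sup>2 + |Q\<^sup>*v|\<^sup>2\<close>,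
  so it has trivial kernel and nonzero determinant.\<close>
lemma det_one_plus_grams_nonzero:
  assumes R: "R \<in> carrier_mat a m" and Q: "Q \<in> carrier_mat a b"
  shows "det (1\<^sub>m a + R * adj R + Q * adj Q) \<noteq> 0"
proof
  let ?G = "1\<^sub>m a + R * adj R + Q * adj Q"
  assume "det ?G = 0"
  then obtain v where v: "v \<in> carrier_vec a" "v \<noteq> 0\<^sub>v a" and Gv: "?G *\<^sub>v v = 0\<^sub>v a"
    using det_0_iff_vec_prod_zero_field[of ?G a] R Q by auto
  let ?x = "R *\<^sub>v (adj R *\<^sub>v v)" and ?y = "Q *\<^sub>v (adj Q *\<^sub>v v)"
  have x: "?x \<in> carrier_vec a" and y: "?y \<in> carrier_vec a" using R Q v by (auto intro!: mult_mat_vec_carrier)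
  have expand: "?G *\<^sub>v v = v + ?x + ?y"
  proof -
    have RR: "R * adj R \<in> carrier_mat a a" and QQ: "Q * adj Q \<in> carrier_mat a a"
      using R Q by auto
    have "?G *\<^sub>v v = 1\<^sub>m a *\<^sub>v v + (R * adj R) *\<^sub>v v + (Q * adj Q) *\<^sub>v v"
      using RR QQ v by (simp add: add_mult_distrib_mat_vec[of _ a a])
    thus ?thesis
      using R Q v by (simp add: assoc_mult_mat_vec[of _ a m _ a] assoc_mult_mat_vec[of _ a b _ a])
  qed
  have "0 = (?G *\<^sub>v v) \<bullet>c v" unfolding Gv using v by simp
  also have "\<dots> = (v + ?x + ?y) \<bullet>c v" unfolding expand ..
  also have "\<dots> = v \<bullet>c v + ?x \<bullet>c v + ?y \<bullet>c v"
    using v x y by (simp add: add_scalar_prod_distrib[of _ a])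
  also have "\<dots> = v \<bullet>c v + (adj R *\<^sub>v v) \<bullet>c (adj R *\<^sub>v v) + (adj Q *\<^sub>v v) \<bullet>c (adj Q *\<^sub>v v)"
    using adj_mult_vec_inner[OF R v(1)] adj_mult_vec_inner[OF Q v(1)] R Q v
    by (simp add: mult_mat_vec_carrier[of _ m a] mult_mat_vec_carrier[of _ b a])
  also have "\<dots> > 0"
    using v by (intro add_pos_nonneg) auto
  finally show False by simp
qed

lemma minv_nonzero_det:
  assumes A: "(A :: complex mat) \<in> carrier_mat k k" and det: "det A \<noteq> 0"
  shows "minv A \<in> carrier_mat k k" "A * minv A = 1\<^sub>m k" "minv A * A = 1\<^sub>m k"
proof -
  have "A \<in> Units (ring_mat TYPE(complex) k undefined)"
    by (rule det_non_zero_imp_unit[OF A det])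
  then obtain C where C: "mat_inverse A = Some C"
    using mat_inverse(1)[OF A] by fastforce
  with mat_inverse(2)[OF A C] show "minv A \<in> carrier_mat k k" "A * minv A = 1\<^sub>m k" "minv A * A = 1\<^sub>m k"
    unfolding minv_def by auto
qed

lemma minv_right_inverse:
  assumes A: "(A :: complex mat) \<in> carrier_mat k k" and B: "B \<in> carrier_mat k k" and AB: "A * B = 1\<^sub>m k"
  shows "minv A \<in> carrier_mat k k" "A * minv A = 1\<^sub>m k" "minv A * A = 1\<^sub>m k"
proof -
  have "det A * det B = 1" using det_mult[OF A B] AB by simp
  hence "det A \<noteq> 0" by auto
  thus "minv A \<in> carrier_mat k k" "A * minv A = 1\<^sub>m k" "minv A * A = 1\<^sub>m k"
    using minv_nonzero_det[OF A] by auto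
qed

lemma minv_invertible:
  assumes A: "(A :: complex mat) \<in> carrier_mat k k" and inv: "invertible_mat A"
  shows "minv A \<in> carrier_mat k k" "A * minv A = 1\<^sub>m k" "minv A * A = 1\<^sub>m k"
proof -
  obtain B where AB: "A * B = 1\<^sub>m k" and BA: "B * A = 1\<^sub>m (dim_row B)"
    using inv A unfolding invertible_mat_def inverts_mat_def by auto
  have "B \<in> carrier_mat k k"
    using arg_cong[OF AB, of dim_col] arg_cong[OF BA, of dim_col] A by auto
  thus "minv A \<in> carrier_mat k k" "A * minv A = 1\<^sub>m k" "minv A * A = 1\<^sub>m k"
    using minv_right_inverse[OF A _ AB] by auto
qed

section \<open>An entrywise norm\<close>

text \<open>The entrywise \<open>\<ell>\<^sup>1\<close> norm of a matrix.  It dominates every entry and is submultiplicative, which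
  is all that is needed to control matrix power series.\<close>

definition entry_norm :: "complex mat \<Rightarrow> real" where
  "entry_norm A = (\<Sum>i<dim_row A. \<Sum>l<dim_col A. norm (A $$ (i, l)))"

lemma entry_norm_nonneg: "0 \<le> entry_norm A"
  unfolding entry_norm_def by (intro sum_nonneg) auto

lemma row_norm_le_entry_norm:
  "i < dim_row A \<Longrightarrow> (\<Sum>l<dim_col A. norm (A $$ (i, l))) \<le> entry_norm A"
  unfolding entry_norm_def
  by (rule member_le_sum[where f = "\<lambda>i. \<Sum>l<dim_col A. norm (A $$ (i, l))"]) (auto intro: sum_nonneg)

lemma entry_le_entry_norm:
  assumes "i < dim_row A" "l < dim_col A"
  shows "norm (A $$ (i, l)) \<le> entry_norm A"
proof -
  have "norm (A $$ (i, l)) \<le> (\<Sum>l<dim_col A. norm (A $$ (i, l)))"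
    by (rule member_le_sum) (use assms in auto)
  also have "\<dots> \<le> entry_norm A" by (rule row_norm_le_entry_norm) (use assms in auto)
  finally show ?thesis .
qed

lemma entry_norm_le_entry_bound:
  fixes c :: real
  assumes "\<And>i l. i < dim_row A \<Longrightarrow> l < dim_col A \<Longrightarrow> norm (A $$ (i, l)) \<le> c"
  shows "entry_norm A \<le> dim_row A * dim_col A * c"
proof -
  have "entry_norm A \<le> (\<Sum>i<dim_row A. \<Sum>l<dim_col A. c)"
    unfolding entry_norm_def by (intro sum_mono assms) auto
  thus ?thesis by simp
qed

lemma index_mult_mat_sum:
  "i < dim_row A \<Longrightarrow> l < dim_col B \<Longrightarrow> dim_col A = dim_row B \<Longrightarrow>
   (A * B) $$ (i, l) = (\<Sum>t<dim_row B. A $$ (i, t) * B $$ (t, l))"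
  by (simp add: scalar_prod_def lessThan_atLeast0)

lemma entry_norm_mult:
  assumes d: "dim_col A = dim_row B"
  shows "entry_norm (A * B) \<le> entry_norm A * entry_norm B"
proof -
  have "entry_norm (A * B) =
      (\<Sum>i<dim_row A. \<Sum>l<dim_col B. norm (\<Sum>t<dim_row B. A $$ (i, t) * B $$ (t, l)))"
    unfolding entry_norm_def using d
    by (auto simp del: index_mult_mat(1) simp: index_mult_mat_sum intro!: sum.cong)
  also have "\<dots> \<le> (\<Sum>i<dim_row A. \<Sum>l<dim_col B. \<Sum>t<dim_row B. norm (A $$ (i, t)) * norm (B $$ (t, l)))"
    by (intro sum_mono) (simp add: norm_mult[symmetric] norm_sum)
  also have "\<dots> = (\<Sum>i<dim_row A. \<Sum>t<dim_row B. norm (A $$ (i, t)) * (\<Sum>l<dim_col B. norm (B $$ (t, l))))"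
    by (simp add: sum_distrib_left sum.swap[where A = "{..<dim_col B}"])
  also have "\<dots> \<le> (\<Sum>i<dim_row A. \<Sum>t<dim_row B. norm (A $$ (i, t)) * entry_norm B)"
    by (intro sum_mono mult_left_mono row_norm_le_entry_norm) auto
  also have "\<dots> = entry_norm A * entry_norm B"
    unfolding entry_norm_def using d by (simp add: sum_distrib_right)
  finally show ?thesis .
qed

lemma entry_norm_one: "entry_norm (1\<^sub>m k) = k"
proof -
  have "entry_norm (1\<^sub>m k) = (\<Sum>i<k. \<Sum>l<k. if i = l then 1 else 0)"
    unfolding entry_norm_def by (intro sum.cong refl) auto
  thus ?thesis by simp
qed

text \<open>Submultiplicativity iterated; the factor \<open>k\<close> accounts for \<open>T\<^sup>0 = 1\<close>.\<close>
lemma entry_norm_power: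
  assumes T: "T \<in> carrier_mat k k"
  shows "entry_norm (T ^\<^sub>m j) \<le> k * entry_norm T ^ j"
proof (induct j)
  case 0
  thus ?case using T by (simp add: entry_norm_one)
next
  case (Suc j)
  have "entry_norm (T ^\<^sub>m Suc j) \<le> entry_norm (T ^\<^sub>m j) * entry_norm T"
    using T by (simp add: entry_norm_mult)
  also have "\<dots> \<le> k * entry_norm T ^ j * entry_norm T"
    by (rule mult_right_mono[OF Suc entry_norm_nonneg])
  finally show ?case by (simp add: mult_ac)
qed

section \<open>The Neumann series\<close>

abbreviation neumann_term :: "complex \<Rightarrow> complex mat \<Rightarrow> nat \<Rightarrow> complex mat" where
  "neumann_term z T j \<equiv> (z ^ j) \<cdot>\<^sub>m T ^\<^sub>m j"

definition neumann_sum :: "nat \<Rightarrow> complex \<Rightarrow> complex mat \<Rightarrow> complex mat" where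
  "neumann_sum q z T = mat q q (\<lambda>(i, l). \<Sum>j. neumann_term z T j $$ (i, l))"

lemma neumann_sum_dims [simp]: "dim_row (neumann_sum q z T) = q" "dim_col (neumann_sum q z T) = q"
  unfolding neumann_sum_def by auto

context
  fixes T :: "complex mat" and q :: nat and z :: complex
  assumes T: "T \<in> carrier_mat q q" and small: "norm z * entry_norm T \<le> 1/2"
begin

lemma neumann_term_bound:
  assumes "i < q" "l < q"
  shows "norm (neumann_term z T j $$ (i, l)) \<le> q * (1/2) ^ j"
proof -
  have "norm (neumann_term z T j $$ (i, l)) = norm z ^ j * norm ((T ^\<^sub>m j) $$ (i, l))"
    using assms T by (simp add: norm_mult norm_power)
  also have "\<dots> \<le> norm z ^ j * (q * entry_norm T ^ j)"
    using assms T entry_le_entry_norm[of i "T ^\<^sub>m j" l]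
    by (intro mult_left_mono order.trans[OF _ entry_norm_power[OF T]]) auto
  also have "\<dots> = q * (norm z * entry_norm T) ^ j" by (simp add: power_mult_distrib)
  also have "\<dots> \<le> q * (1/2) ^ j"
    by (intro mult_left_mono power_mono small) (simp_all add: entry_norm_nonneg)
  finally show ?thesis .
qed

lemma neumann_term_norm_summable:
  "i < q \<Longrightarrow> l < q \<Longrightarrow> summable (\<lambda>j. norm (neumann_term z T j $$ (i, l)))"
  by (rule summable_comparison_test'[where g = "\<lambda>j. q * (1/2) ^ j"])
     (auto intro: summable_mult summable_geometric neumann_term_bound)

lemma neumann_summable:
  "i < q \<Longrightarrow> l < q \<Longrightarrow> summable (\<lambda>j. neumann_term z T j $$ (i, l))"
  by (rule summable_norm_cancel[OF neumann_term_norm_summable])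

lemma neumann_sum_bound:
  assumes "i < q" "l < q"
  shows "norm (neumann_sum q z T $$ (i, l)) \<le> 2 * q"
proof -
  have "norm (neumann_sum q z T $$ (i, l)) = norm (\<Sum>j. neumann_term z T j $$ (i, l))"
    unfolding neumann_sum_def using assms by simp
  also have "\<dots> \<le> (\<Sum>j. norm (neumann_term z T j $$ (i, l)))"
    by (rule summable_norm[OF neumann_term_norm_summable[OF assms]])
  also have "\<dots> \<le> (\<Sum>j. q * (1/2::real) ^ j)"
    by (intro suminf_le neumann_term_bound[OF assms] neumann_term_norm_summable[OF assms]
        summable_mult summable_geometric) auto
  also have "\<dots> = 2 * q"
    using suminf_mult[OF summable_geometric[of "1/2::real"]] suminf_geometric[of "1/2::real"] by simp
  finally show ?thesis .
qed

text \<open>Telescoping: \<open>(\<Sum>\<^sub>j z\<^sup>j T\<^sup>j) (1 - z T) = 1\<close>.\<close>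
lemma neumann_sum_left_inverse: "neumann_sum q z T * (1\<^sub>m q - z \<cdot>\<^sub>m T) = 1\<^sub>m q"
proof (rule eq_matI)
  fix i l assume "i < dim_row (1\<^sub>m q)" "l < dim_col (1\<^sub>m q)"
  hence i: "i < q" and l: "l < q" by auto
  let ?W = "neumann_sum q z T" and ?C = "1\<^sub>m q - z \<cdot>\<^sub>m T"
  have step: "neumann_term z T j * ?C = neumann_term z T j - neumann_term z T (Suc j)" for j
    using T by (simp add: mat_algebra)
  have "(?W * ?C) $$ (i, l) = (\<Sum>t<q. ?W $$ (i, t) * ?C $$ (t, l))"
    using i l T by (subst index_mult_mat_sum) auto
  also have "\<dots> = (\<Sum>t<q. \<Sum>j. neumann_term z T j $$ (i, t) * ?C $$ (t, l))"
    using i by (intro sum.cong refl) (simp add: neumann_sum_def suminf_mult2[OF neumann_summable])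
  also have "\<dots> = (\<Sum>j. \<Sum>t<q. neumann_term z T j $$ (i, t) * ?C $$ (t, l))"
    by (rule suminf_sum[symmetric]) (use i in \<open>auto intro!: summable_mult2 neumann_summable\<close>)
  also have "\<dots> = (\<Sum>j. (neumann_term z T j * ?C) $$ (i, l))"
    using i l T by (intro suminf_cong) (subst index_mult_mat_sum, auto)
  also have "\<dots> = (\<Sum>j. neumann_term z T j $$ (i, l) - neumann_term z T (Suc j) $$ (i, l))"
    unfolding step using i l T by simp
  also have "\<dots> = neumann_term z T 0 $$ (i, l)"
  proof (rule sums_unique[symmetric], rule telescope_sums'[where c = 0, simplified])
    show "(\<lambda>j. neumann_term z T j $$ (i, l)) \<longlonglongrightarrow> 0"
      by (rule Lim_null_comparison[where g = "\<lambda>j. q * (1/2) ^ j"])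
         (use neumann_term_bound[OF i l] in \<open>auto intro!: tendsto_mult_right_zero LIMSEQ_power_zero\<close>)
  qed
  also have "\<dots> = 1\<^sub>m q $$ (i, l)" using i l T by auto
  finally show "(?W * ?C) $$ (i, l) = 1\<^sub>m q $$ (i, l)" .
qed (use T in auto)

lemma neumann_sum_right_inverse: "(1\<^sub>m q - z \<cdot>\<^sub>m T) * neumann_sum q z T = 1\<^sub>m q"
  by (rule mat_mult_left_right_inverse[OF _ _ neumann_sum_left_inverse]) (use T in auto)

end

lemma tendsto_at_right_0_of_linear_bound:
  fixes f :: "real \<Rightarrow> 'a::real_normed_vector"
  assumes "\<forall>\<^sub>F k in at_right 0. norm (f k - L) \<le> C * k"
  shows "(f \<longlongrightarrow> L) (at_right 0)"
proof (rule LIM_zero_cancel, rule Lim_null_comparison[OF assms])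
  show "((\<lambda>k. C * k) \<longlongrightarrow> 0) (at_right 0)"
    by (rule tendsto_eq_intros | simp)+
qed

section \<open>The PQRS construction\<close>

text \<open>The vertex space \<open>\<complex>\<^sup>n\<close>, \<open>n = m + a + b\<close>, is split into blocks of sizes
  \<open>m, a, b\<close>; \<open>S\<close> is invertible.\<close>

locale pqrs_data =
  fixes m a b :: nat and S P Q R :: "complex mat"
  assumes S_carrier [simp]: "S \<in> carrier_mat m m" and S_invertible: "invertible_mat S"
    and P_carrier [simp]: "P \<in> carrier_mat m b" and Q_carrier [simp]: "Q \<in> carrier_mat a b"
    and R_carrier [simp]: "R \<in> carrier_mat a m"
begin

abbreviation "n \<equiv> m + a + b"

lemma data_dims [simp]:
  "dim_row S = m" "dim_col S = m" "dim_row P = m" "dim_col P = b"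
  "dim_row Q = a" "dim_col Q = b" "dim_row R = a" "dim_col R = m"
  using carrier_matD[OF S_carrier] carrier_matD[OF P_carrier] carrier_matD[OF Q_carrier]
    carrier_matD[OF R_carrier] by auto

text \<open>The block rows of \<open>A_PQRS\<close>: \<open>U = [S, -S R\<^sup>*, 0]\<close>, a zero row block, \<open>V = [-P\<^sup>*, (RP-Q)\<^sup>*, I]\<close>;
  the column blocks \<open>E = [I; 0; P\<^sup>*]\<close>, \<open>M = M_Q = [R\<^sup>*; I; Q\<^sup>*]\<close>, \<open>J = [0; 0; I]\<close>, whose adjoints
  are the nonzero block rows of \<open>B_PQRS\<close>; and \<open>N = R + Q P\<^sup>*\<close>, \<open>H = I + R R\<^sup>* + Q Q\<^sup>*\<close>.\<close>

definition "U = hstack3 S (- (S * adj R)) (0\<^sub>m m b)"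
definition "V = hstack3 (- adj P) (adj (R * P - Q)) (1\<^sub>m b)"
definition "E = vstack3 (1\<^sub>m m) (0\<^sub>m a m) (adj P)"
definition "M = vstack3 (adj R) (1\<^sub>m a) (adj Q)"
definition "J = vstack3 (0\<^sub>m m b) (0\<^sub>m a b) (1\<^sub>m b)"
definition "N = R + Q * adj P"
definition "H = 1\<^sub>m a + R * adj R + Q * adj Q"

lemma block_dims [simp]:
  "dim_row U = m" "dim_col U = n" "dim_row V = b" "dim_col V = n"
  "dim_row E = n" "dim_col E = m" "dim_row M = n" "dim_col M = a" "dim_row J = n" "dim_col J = b"
  "dim_row N = a" "dim_col N = m" "dim_row H = a" "dim_col H = a"
  unfolding U_def V_def E_def M_def J_def N_def H_def by auto

lemma adj_E: "adj E = hstack3 (1\<^sub>m m) (0\<^sub>m m a) P"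
  unfolding E_def by (subst adj_vstack3) auto

lemma adj_M: "adj M = hstack3 R (1\<^sub>m a) Q"
  unfolding M_def by (subst adj_vstack3) auto

lemma A_PQRS_blocks: "A_PQRS P Q R S = vstack3 U (0\<^sub>m a n) V"
  unfolding A_PQRS_def U_def V_def vstack3_def hstack3_def vstack_def hstack_def Let_def
  by (intro eq_matI) auto

lemma B_PQRS_blocks: "B_PQRS P Q R S = vstack3 (adj E) (adj M) (0\<^sub>m b n)"
  unfolding B_PQRS_def adj_E adj_M vstack3_def hstack3_def vstack_def hstack_def Let_def
  by (intro eq_matI) auto

text \<open>All products of a block row with a block column; these are the only matrix
  identities the construction of the resolvent relies on.\<close>
lemma block_products [simp]:
  "U * M = 0\<^sub>m m a" "V * M = 0\<^sub>m b a" "adj E * M = adj N" "adj M * M = H"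
  "U * E = S" "V * E = 0\<^sub>m b m" "adj M * E = N"
  "U * J = 0\<^sub>m m b" "V * J = 1\<^sub>m b" "adj E * J = P" "adj M * J = Q"
  unfolding adj_E adj_M unfolding U_def V_def E_def M_def J_def N_def H_def
  by (subst hstack3_mult_vstack3[of _ _ m _ a _ b]; auto simp: mat_algebra intro!: eq_matI)+

lemmas block_products_assoc [simp] = block_products [THEN mult_assoc_cancel]

text \<open>\<open>H\<close> is invertible since \<open>H - I\<close> is positive semidefinite; \<open>G = H\<^sup>-\<^sup>1\<close>, and \<open>S\<^sup>-\<^sup>1\<close> exists by assumption.\<close>

definition "G = minv H"
definition "Si = minv S"

lemma G_inverse: "G \<in> carrier_mat a a" "H * G = 1\<^sub>m a" "G * H = 1\<^sub>m a"
proof -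
  have "H \<in> carrier_mat a a" by (rule carrier_matI) auto
  with det_one_plus_grams_nonzero[OF R_carrier Q_carrier]
  show "G \<in> carrier_mat a a" "H * G = 1\<^sub>m a" "G * H = 1\<^sub>m a"
    using minv_nonzero_det[of H a] unfolding G_def H_def by auto
qed

lemma Si_inverse: "Si \<in> carrier_mat m m" "S * Si = 1\<^sub>m m" "Si * S = 1\<^sub>m m"
  using minv_invertible[OF S_carrier S_invertible] unfolding Si_def by auto

lemma inverse_dims [simp]: "dim_row G = a" "dim_col G = a" "dim_row Si = m" "dim_col Si = m"
  using G_inverse(1) Si_inverse(1) by auto

declare G_inverse(2,3) [simp] Si_inverse(2,3) [simp]
lemmas inverse_assoc [simp] =
  G_inverse(2,3) [THEN mult_assoc_cancel] Si_inverse(2,3) [THEN mult_assoc_cancel]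

lemma adj_G: "adj G = G"
proof -
  have adj_H: "adj H = H" unfolding H_def by (simp add: mat_algebra)
  have "adj (H * G) = adj G * adj H" by (rule adj_mult) simp
  hence "adj G * H = 1\<^sub>m a" by (simp add: adj_H)
  have "adj G = adj G * (H * G)" using G_inverse(2) by simp
  also have "\<dots> = (adj G * H) * G" by (simp add: assoc_mult_dims)
  also have "\<dots> = G" using \<open>adj G * H = 1\<^sub>m a\<close> by simp
  finally show ?thesis .
qed

text \<open>The matrix \<open>X = E - M G N\<close> of the theorem spans the part of the kernel of the "boundary"
  rows \<open>V\<close> and \<open>M\<^sup>*\<close>; on it \<open>U\<close> acts as \<open>S\<close>.  \<open>T = S\<^sup>-\<^sup>1 X\<^sup>* X\<close> is the operator of the Neumann series.\<close>

definition "X = E - M * G * N"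
definition "T = Si * (adj X * X)"

lemma X_dims [simp]: "dim_row X = n" "dim_col X = m" "dim_row T = m" "dim_col T = m"
  unfolding X_def T_def by auto

lemma X_products: "U * X = S" "V * X = 0\<^sub>m b m" "adj M * X = 0\<^sub>m a m" "adj E * X = adj X * X"
proof -
  show "U * X = S" "V * X = 0\<^sub>m b m" "adj M * X = 0\<^sub>m a m"
    unfolding X_def by (simp_all add: mat_algebra)
  have "adj X = adj E - adj N * (G * adj M)"
    unfolding X_def by (simp add: mat_algebra adj_G)
  thus "adj E * X = adj X * X"
    using \<open>adj M * X = 0\<^sub>m a m\<close> by (simp add: mat_algebra)
qed

lemmas X_products_assoc [simp] = X_products [THEN mult_assoc_cancel]

text \<open>\<open>K z = A + z B\<close> with \<open>A = - A_PQRS\<close>, \<open>B = B_PQRS\<close>: the matrix inverted in the scattering matrix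
  at \<open>z = \<i>k\<close>.\<close>

definition "K z = - A_PQRS P Q R S + z \<cdot>\<^sub>m B_PQRS P Q R S"

lemma K_dims [simp]: "dim_row (K z) = n" "dim_col (K z) = n"
  unfolding K_def A_PQRS_blocks B_PQRS_blocks by auto

lemma K_mult:
  assumes "dim_row Y = n"
  shows "K z * Y = vstack3 (z \<cdot>\<^sub>m (adj E * Y) - U * Y) (z \<cdot>\<^sub>m (adj M * Y)) (- (V * Y))"
proof -
  have "- vstack3 U (0\<^sub>m a n) V + z \<cdot>\<^sub>m vstack3 (adj E) (adj M) (0\<^sub>m b n) =
        vstack3 (z \<cdot>\<^sub>m adj E - U) (z \<cdot>\<^sub>m adj M) (- V)"
    by (simp add: mat_algebra) (intro arg_cong3[where f = vstack3] eq_matI; simp)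
  hence "K z = vstack3 (z \<cdot>\<^sub>m adj E - U) (z \<cdot>\<^sub>m adj M) (- V)"
    unfolding K_def A_PQRS_blocks B_PQRS_blocks .
  thus ?thesis using assms by (simp add: mat_algebra)
qed

lemma K_X: "dim_row Z = m \<Longrightarrow>
  K z * (X * Z) = vstack3 (z \<cdot>\<^sub>m (adj X * (X * Z)) - S * Z) (0\<^sub>m a (dim_col Z)) (0\<^sub>m b (dim_col Z))"
  by (simp add: K_mult mat_algebra)

lemma K_M: "dim_row Z = a \<Longrightarrow>
  K z * (M * Z) = vstack3 (z \<cdot>\<^sub>m (adj N * Z)) (z \<cdot>\<^sub>m (H * Z)) (0\<^sub>m b (dim_col Z))"
  by (simp add: K_mult mat_algebra)

lemma K_J: "K z * J = vstack3 (z \<cdot>\<^sub>m P) (z \<cdot>\<^sub>m Q) (- 1\<^sub>m b)"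
  by (simp add: K_mult mat_algebra)

definition "F0 = - 1\<^sub>m n + 2 \<cdot>\<^sub>m (M * G * adj M)"

context
  fixes z :: complex and W :: "complex mat"
  assumes z_nonzero: "z \<noteq> 0"
    and W_dims [simp]: "dim_row W = m" "dim_col W = m"
    and W_inverse: "(1\<^sub>m m - z \<cdot>\<^sub>m T) * W = 1\<^sub>m m"
begin

text \<open>Since \<open>z X\<^sup>*X - S = -S (1 - z T)\<close>, the block \<open>z X\<^sup>*X - S\<close> is inverted by \<open>- W S\<^sup>-\<^sup>1\<close>.\<close>
lemma resolvent_identity: "(z \<cdot>\<^sub>m (adj X * X) - S) * W = - S"
proof -
  have "z \<cdot>\<^sub>m (adj X * X) - S = - (S * (1\<^sub>m m - z \<cdot>\<^sub>m T))"
    unfolding T_def by (simp add: mat_algebra) (intro eq_matI; simp)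
  hence "(z \<cdot>\<^sub>m (adj X * X) - S) * W = - (S * ((1\<^sub>m m - z \<cdot>\<^sub>m T) * W))"
    by (simp add: assoc_mult_dims)
  thus ?thesis unfolding W_inverse by simp
qed

lemma K_XW:
  assumes "dim_row Z = m"
  shows "K z * (X * (W * Z)) = vstack3 (- (S * Z)) (0\<^sub>m a (dim_col Z)) (0\<^sub>m b (dim_col Z))"
  using mult_assoc_cancel[OF resolvent_identity, of Z] assms by (simp add: K_X mat_algebra)

definition "Y1 = - (X * (W * Si))"
definition "Y2 = M * ((1 / z) \<cdot>\<^sub>m G) + X * (W * (Si * (adj N * G)))"
definition "Y3 = - J + Y1 * (z \<cdot>\<^sub>m P) + Y2 * (z \<cdot>\<^sub>m Q)"

lemma Y_dims [simp]:
  "dim_row Y1 = n" "dim_col Y1 = m" "dim_row Y2 = n" "dim_col Y2 = a" "dim_row Y3 = n" "dim_col Y3 = b"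
  unfolding Y1_def Y2_def Y3_def by auto

lemma K_Y1: "K z * Y1 = vstack3 (1\<^sub>m m) (0\<^sub>m a m) (0\<^sub>m b m)"
  unfolding Y1_def by (simp add: K_XW mat_algebra)

lemma K_Y2: "K z * Y2 = vstack3 (0\<^sub>m m a) (1\<^sub>m a) (0\<^sub>m b a)"
  unfolding Y2_def using z_nonzero by (simp add: K_XW K_M mat_algebra)

lemma K_Y3: "K z * Y3 = vstack3 (0\<^sub>m m b) (0\<^sub>m a b) (1\<^sub>m b)"
  unfolding Y3_def
  by (simp add: K_J K_Y1 [THEN mult_assoc_cancel] K_Y2 [THEN mult_assoc_cancel] mat_algebra)

lemma K_right_inverse: "K z * hstack3 Y1 Y2 Y3 = 1\<^sub>m n"
  by (simp add: K_Y1 K_Y2 K_Y3 hstack3_unit_columns mat_algebra)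

text \<open>A right inverse of a square matrix is two-sided, so \<open>K z\<close> is invertible and \<open>minv\<close> inverts it.\<close>
lemma K_invertible: "invertible_mat (K z)" and minv_K: "minv (K z) * K z = 1\<^sub>m n" "minv (K z) \<in> carrier_mat n n"
proof -
  have K: "K z \<in> carrier_mat n n" and Y: "hstack3 Y1 Y2 Y3 \<in> carrier_mat n n"
    by (auto intro: carrier_matI)
  have "hstack3 Y1 Y2 Y3 * K z = 1\<^sub>m n"
    by (rule mat_mult_left_right_inverse[OF K Y K_right_inverse])
  thus "invertible_mat (K z)"
    using K_right_inverse Y unfolding invertible_mat_def inverts_mat_def
    by (auto intro!: exI[of _ "hstack3 Y1 Y2 Y3"] simp: square_mat.simps)
  show "minv (K z) * K z = 1\<^sub>m n" "minv (K z) \<in> carrier_mat n n"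
    using minv_right_inverse[OF K Y K_right_inverse] by auto
qed

text \<open>The scattering matrix is \<open>F = F0 - 2z X W S\<^sup>-\<^sup>1 X\<^sup>*\<close>: it satisfies
  \<open>K z F = - K z + 2z B\<close>, i.e. \<open>-(A + zB)\<^sup>-\<^sup>1 (A - zB) = F\<close>.\<close>
definition "F = F0 - (2 * z) \<cdot>\<^sub>m (X * W * Si * adj X)"

lemma K_F: "K z * F = - K z + (2 * z) \<cdot>\<^sub>m B_PQRS P Q R S"
proof -
  have adj_X: "adj X = adj E - adj N * (G * adj M)"
    unfolding X_def by (simp add: mat_algebra adj_G)
  have KM: "K z * (M * (G * adj M)) = vstack3 (z \<cdot>\<^sub>m (adj N * (G * adj M))) (z \<cdot>\<^sub>m adj M) (0\<^sub>m b n)"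
    by (simp add: K_M)
  have KX: "K z * (X * (W * (Si * adj X))) = vstack3 (- adj X) (0\<^sub>m a n) (0\<^sub>m b n)"
    by (simp add: K_XW)
  have "K z * F = - K z + 2 \<cdot>\<^sub>m (K z * (M * (G * adj M))) - (2 * z) \<cdot>\<^sub>m (K z * (X * (W * (Si * adj X))))"
    unfolding F_def F0_def by (simp add: mat_algebra)
  also have "\<dots> = - K z + (2 \<cdot>\<^sub>m vstack3 (z \<cdot>\<^sub>m (adj N * (G * adj M))) (z \<cdot>\<^sub>m adj M) (0\<^sub>m b n)
       - (2 * z) \<cdot>\<^sub>m vstack3 (- adj X) (0\<^sub>m a n) (0\<^sub>m b n))"
    unfolding KM KX by (intro eq_matI) auto
  also have "2 \<cdot>\<^sub>m vstack3 (z \<cdot>\<^sub>m (adj N * (G * adj M))) (z \<cdot>\<^sub>m adj M) (0\<^sub>m b n)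
       - (2 * z) \<cdot>\<^sub>m vstack3 (- adj X) (0\<^sub>m a n) (0\<^sub>m b n) = (2 * z) \<cdot>\<^sub>m B_PQRS P Q R S"
    unfolding B_PQRS_blocks adj_X
    by (simp add: mat_algebra) (intro arg_cong3[where f = vstack3] eq_matI; auto simp: algebra_simps)
  finally show ?thesis .
qed

lemma scattering_eq_F: "- (minv (K z) * (- A_PQRS P Q R S - z \<cdot>\<^sub>m B_PQRS P Q R S)) = F"
proof -
  have F_dims: "dim_row F = n" "dim_col F = n" unfolding F_def F0_def by auto
  have "- A_PQRS P Q R S - z \<cdot>\<^sub>m B_PQRS P Q R S = - (- K z + (2 * z) \<cdot>\<^sub>m B_PQRS P Q R S)"
    unfolding K_def A_PQRS_blocks B_PQRS_blocks by (intro eq_matI) (auto simp: algebra_simps)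
  also have "\<dots> = - (K z * F)" by (simp only: K_F)
  finally have "- (minv (K z) * (- A_PQRS P Q R S - z \<cdot>\<^sub>m B_PQRS P Q R S)) = minv (K z) * K z * F"
    using minv_K(2) F_dims by (simp add: mat_algebra)
  also have "\<dots> = F" using minv_K(1) F_dims by simp
  finally show ?thesis .
qed

end

lemma statement_notation:
  "M_Q Q R = M" "G_QR Q R = G" "Xmat P Q R S = X" "minv S = Si" "Si * adj X * X = T"
proof -
  show MQ: "M_Q Q R = M" and GQ: "G_QR Q R = G"
    unfolding M_Q_def M_def G_QR_def G_def H_def vstack3_def by simp_all
  show "Xmat P Q R S = X"
    unfolding Xmat_def X_def E_def N_def vstack3_def MQ GQ by simp
  show "minv S = Si" "Si * adj X * X = T"
    unfolding Si_def[symmetric] T_def by (simp_all add: assoc_mult_dims)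
qed

text \<open>A threshold below which \<open>|\<i>k| \<cdot> \<parallel>T\<parallel> \<le> 1/2\<close>, so that the Neumann series for \<open>(1 - \<i>k T)\<^sup>-\<^sup>1\<close> applies.\<close>
definition "k0 = 1 / (2 * (entry_norm T + 1))"

lemma k0_pos: "k0 > 0"
  unfolding k0_def using entry_norm_nonneg[of T] by simp

lemma small_below_k0:
  assumes "0 < k" "k < k0"
  shows "norm (\<i> * complex_of_real k) * entry_norm T \<le> 1/2"
proof -
  have "k * (2 * (entry_norm T + 1)) < 1"
    using assms entry_norm_nonneg[of T] unfolding k0_def by (simp add: field_simps)
  thus ?thesis using assms entry_norm_nonneg[of T] by (simp add: norm_mult algebra_simps)
qed

lemma scattering_expansion:
  assumes k: "0 < k" "k < k0"
  defines "z \<equiv> \<i> * complex_of_real k"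
  shows "invertible_mat (- A_PQRS P Q R S + z \<cdot>\<^sub>m B_PQRS P Q R S)"
    and "i < m \<Longrightarrow> l < m \<Longrightarrow> summable (\<lambda>j. ((z ^ j) \<cdot>\<^sub>m T ^\<^sub>m j) $$ (i, l))"
    and "scat P Q R S k = F0 - (2 * \<i> * complex_of_real k) \<cdot>\<^sub>m (X * neumann_sum m z T * Si * adj X)"
proof -
  have T: "T \<in> carrier_mat m m" by (rule carrier_matI) simp_all
  note small = small_below_k0[OF k, folded z_def]
  have z: "z \<noteq> 0" unfolding z_def using k by simp
  note W = z neumann_sum_dims[of m z T] neumann_sum_right_inverse[OF T small]
  show "invertible_mat (- A_PQRS P Q R S + z \<cdot>\<^sub>m B_PQRS P Q R S)"
    using K_invertible[OF W] unfolding K_def .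
  show "i < m \<Longrightarrow> l < m \<Longrightarrow> summable (\<lambda>j. ((z ^ j) \<cdot>\<^sub>m T ^\<^sub>m j) $$ (i, l))"
    by (rule neumann_summable[OF T small])
  have "scat P Q R S k = F z (neumann_sum m z T)"
    using scattering_eq_F[OF W] unfolding scat_def K_def Let_def z_def by simp
  thus "scat P Q R S k = F0 - (2 * \<i> * complex_of_real k) \<cdot>\<^sub>m (X * neumann_sum m z T * Si * adj X)"
    unfolding F_def[OF W] by (simp add: z_def mult.assoc)
qed

text \<open>The correction term is \<open>O(k)\<close> since the Neumann sum stays bounded, hence \<open>S(k) \<rightarrow> F0\<close>.\<close>
lemma scattering_limit:
  assumes "i < n" "l < n"
  shows "((\<lambda>k. scat P Q R S k $$ (i, l)) \<longlongrightarrow> F0 $$ (i, l)) (at_right 0)"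
proof (rule tendsto_at_right_0_of_linear_bound)
  define C where "C = 2 * (entry_norm X * (m * m * (2 * m)) * entry_norm Si * entry_norm (adj X))"
  have T: "T \<in> carrier_mat m m" by (rule carrier_matI) simp_all
  have "\<forall>\<^sub>F k in at_right 0. k \<in> {0<..<k0}" by (rule eventually_at_right_real[OF k0_pos])
  thus "\<forall>\<^sub>F k in at_right 0. norm (scat P Q R S k $$ (i, l) - F0 $$ (i, l)) \<le> C * k"
  proof (rule eventually_mono)
    fix k :: real assume "k \<in> {0<..<k0}"
    hence k: "0 < k" "k < k0" by auto
    let ?W = "neumann_sum m (\<i> * complex_of_real k) T"
    have W_bound: "entry_norm ?W \<le> m * m * (2 * m)"
      by (rule order.trans[OF entry_norm_le_entry_bound[where c = "2 * m"]])
         (use neumann_sum_bound[OF T small_below_k0[OF k]] in auto)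
    have "norm (scat P Q R S k $$ (i, l) - F0 $$ (i, l)) = 2 * k * norm ((X * ?W * Si * adj X) $$ (i, l))"
      using scattering_expansion(3)[OF k] assms k unfolding F0_def by (simp add: norm_mult)
    also have "\<dots> \<le> 2 * k * entry_norm (X * ?W * Si * adj X)"
      using assms k by (intro mult_left_mono entry_le_entry_norm) auto
    also have "entry_norm (X * ?W * Si * adj X) \<le> entry_norm (X * ?W * Si) * entry_norm (adj X)"
      by (rule entry_norm_mult) simp
    also have "\<dots> \<le> entry_norm X * entry_norm ?W * entry_norm Si * entry_norm (adj X)"
      by (intro mult_right_mono order.trans[OF entry_norm_mult] entry_norm_nonneg
          mult_nonneg_nonneg) simp_all
    also have "\<dots> \<le> entry_norm X * (m * m * (2 * m)) * entry_norm Si * entry_norm (adj X)"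
      by (intro mult_right_mono mult_left_mono W_bound entry_norm_nonneg mult_nonneg_nonneg)
    finally show "norm (scat P Q R S k $$ (i, l) - F0 $$ (i, l)) \<le> C * k"
      using k unfolding C_def by (simp add: mult_ac)
  qed
qed

end

theorem mainTheorem5:
  fixes n rA rB m a b :: nat and S P Q R :: "complex mat"
  assumes "rA \<le> n" and "rB \<le> n"
    and "m = rA + rB - n" and "m \<ge> 1" and "a = n - rA" and "b = n - rB"
    and "S \<in> carrier_mat m m" and "invertible_mat S" and "mat_adjoint S = S"
    and "P \<in> carrier_mat m b" and "Q \<in> carrier_mat a b" and "R \<in> carrier_mat a m"
  shows "(\<exists>\<delta>>0. \<forall>k::real. 0 < k \<and> k < \<delta> \<longrightarrow>
           invertible_mat (- A_PQRS P Q R S + (\<i> * complex_of_real k) \<cdot>\<^sub>m B_PQRS P Q R S)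
         \<and> (\<forall>i<m. \<forall>l<m. summable (\<lambda>j. (((\<i> * complex_of_real k) ^ j)
                  \<cdot>\<^sub>m (minv S * mat_adjoint (Xmat P Q R S) * Xmat P Q R S) ^\<^sub>m j) $$ (i, l)))
         \<and> scat P Q R S k =
             - 1\<^sub>m n + 2 \<cdot>\<^sub>m (M_Q Q R * G_QR Q R * mat_adjoint (M_Q Q R))
             - (2 * \<i> * complex_of_real k) \<cdot>\<^sub>m
                 (Xmat P Q R S
                  * mat m m (\<lambda>(i, l). \<Sum>j. (((\<i> * complex_of_real k) ^ j)
                      \<cdot>\<^sub>m (minv S * mat_adjoint (Xmat P Q R S) * Xmat P Q R S) ^\<^sub>m j) $$ (i, l))
                  * minv S * mat_adjoint (Xmat P Q R S)))
       \<and> (\<forall>i<n. \<forall>l<n. ((\<lambda>k. scat P Q R S k $$ (i, l)) \<longlongrightarrow>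
             (- 1\<^sub>m n + 2 \<cdot>\<^sub>m (M_Q Q R * G_QR Q R * mat_adjoint (M_Q Q R))) $$ (i, l)) (at_right 0))"
proof -
  have n: "n = m + a + b" using assms(1-6) by arith
  interpret pqrs_data m a b S P Q R using assms(7,8,10-12) by unfold_locales
  show ?thesis
    unfolding statement_notation n F0_def[symmetric] neumann_sum_def[symmetric]
    using k0_pos scattering_expansion scattering_limit by (intro conjI exI[of _ k0] allI impI) auto
qed

end
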